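(* Let $\phi$ be an admissible action density and let $\tilde\phi$ be its partial Legendre transform. Then: (1) For every $\rho>0$ the map $w\mapsto\phi(\rho,w)^{1/p}$ is a norm on $\mathbb R^d$ whose dual norm is $z\mapsto\tilde\phi(\rho,z)^{1/q}$, i.e. $\tilde\phi(\rho,z)^{1/q}=\sup_{w\neq0}\frac{w\cdot z}{\phi(\rho,w)^{1/p}}$ and $\phi(\rho,w)^{1/p}=\sup_{z\ne0}\frac{w\cdot z}{\tilde\phi(\rho,z)^{1/q}}$; in particular $\tilde\phi(\rho,\cdot)$ is $q$-homogeneous. (2) $\tilde\phi$ takes values in $[0,\infty)$ and, for every $z\in\mathbb R^d$, $\rho\mapsto\tilde\phi(\rho,z)$ is concave and nondecreasing on $(0,\infty)$; for every $w\in\mathbb R^d$, $\rho\mapsto\phi(\rho,w)$ is convex and nonincreasing on $(0,\infty)$. (3) There exist constants $a,b\ge0$, not both zero, such that $\tilde\phi(\rho,z)\le(a+b\rho)|z|^q$ and $\phi(\rho,w)\ge(a+b\rho)^{1-p}|w|^p$ for all $\rho>0$, $z,w\in\mathbb R^d$. (4) For every compact interval $[\rho_0,\rho_1]\subset(0,\infty)$ there is $C>0$ such that for all $\rho\in[\rho_0,\rho_1]$ and $w,z\in\mathbb R^d$: $C^{-1}|w|^p\le\phi(\rho,w)\le C|w|^p$ and $C^{-1}|z|^q\le\tilde\phi(\rho,z)\le C|z|^q$. Conversely, a function $\phi:(0,\infty)\times\mathbb R^d\to[0,\infty)$ is an admissible action density if and only if it admits the representation $\frac1p\phi(\rho,w)=\sup_{z\in\mathbb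 R^d}\big(w\cdot z-\frac1q\tilde\phi(\rho,z)\big)$ for all $\rho>0,w\in\mathbb R^d$, for some function $\tilde\phi:(0,\infty)\times\mathbb R^d\to[0,\infty)$ which is convex and $q$-homogeneous in $z$, satisfies $\tilde\phi(\rho,z)>0$ for $z\neq0$, and is concave in $\rho$.
   Context: $p\in(1,\infty)$ and $q=p/(p-1)$. An admissible action density is a function $\phi:(0,\infty)\times\mathbb R^d\to[0,\infty)$ which is convex, satisfies $\phi(\rho,\lambda w)=|\lambda|^p\phi(\rho,w)$ for all $\rho>0,\lambda\in\mathbb R,w\in\mathbb R^d$, and for which there is $\rho_0>0$ with $\phi(\rho_0,w)>0$ for all $w\ne0$. Its partial Legendre transform $\tilde\phi:(0,\infty)\times\mathbb R^d\to(-\infty,+\infty]$ is defined by $\frac1q\tilde\phi(\rho,z):=\sup_{w\in\mathbb R^d}\big(z\cdot w-\frac1p\phi(\rho,w)\big)$. *)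

theory Defs
  imports "HOL-Analysis.Analysis"
begin

text \<open>Functions on (0,infinity) x R^d are modelled as total functions
  real => 'a => real, with all conditions restricted to rho > 0.\<close>

definition admissible :: "real \<Rightarrow> (real \<Rightarrow> 'a::euclidean_space \<Rightarrow> real) \<Rightarrow> bool" where
  "admissible p \<phi> \<longleftrightarrow>
     (\<forall>\<rho>>0. \<forall>w. 0 \<le> \<phi> \<rho> w) \<and>
     convex_on ({0<..} \<times> UNIV) (\<lambda>x. \<phi> (fst x) (snd x)) \<and>
     (\<forall>\<rho>>0. \<forall>t w. \<phi> \<rho> (t *\<^sub>R w) = \<bar>t\<bar> powr p * \<phi> \<rho> w) \<and>
     (\<exists>\<rho>0>0. \<forall>w. w \<noteq> 0 \<longrightarrow> \<phi> \<rho>0 w > 0)"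

definition legendre_ereal ::
  "real \<Rightarrow> real \<Rightarrow> (real \<Rightarrow> 'a::euclidean_space \<Rightarrow> real) \<Rightarrow> real \<Rightarrow> 'a \<Rightarrow> ereal" where
  "legendre_ereal p q \<phi> \<rho> z = ereal q * (SUP w. ereal (z \<bullet> w - \<phi> \<rho> w / p))"

text \<open>Its real-valued version (meaningful once finiteness is known).\<close>
definition legendre ::
  "real \<Rightarrow> real \<Rightarrow> (real \<Rightarrow> 'a::euclidean_space \<Rightarrow> real) \<Rightarrow> real \<Rightarrow> 'a \<Rightarrow> real" where
  "legendre p q \<phi> \<rho> z = real_of_ereal (legendre_ereal p q \<phi> \<rho> z)"

definition is_norm :: "('a::real_vector \<Rightarrow> real) \<Rightarrow> bool" where
  "is_norm N \<longleftrightarrow> (\<forall>x. 0 \<le> N x) \<and> (\<forall>x. N x = 0 \<longleftrightarrow> x = 0) \<and>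
     (\<forall>c x. N (c *\<^sub>R x) = \<bar>c\<bar> * N x) \<and> (\<forall>x y. N (x + y) \<le> N x + N y)"

end

theory Submission
  imports Defs
begin

text \<open>
  For a fixed density \<open>\<rho>\<close>, an admissible action density
  \<open>\<phi>(\<rho>,\<cdot>)\<close> is a \<^emph>\<open>\<open>p\<close>-gauge\<close>: convex, \<open>p\<close>-homogeneous and positive off the origin.  Comparisons of \<open>f\<close> with \<open>|w|^p\<close> transfer to \<open>dual^q\<close> via the
  explicit Legendre transform of \<open>c |w|^p / p\<close>.

  Concavity and nonnegativity give linear growth of \<open>\<psi>\<close> in \<open>\<rho>\<close>, hence the global and
  local two-sided bounds.
\<close>

locale conjugate_exponents =
  fixes p q :: real
  assumes p_gt1: "p > 1" and q_eq: "q = p / (p - 1)"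
begin

lemma q_gt1: "q > 1" unfolding q_eq using p_gt1 by (simp add: less_divide_eq)
lemma p_pos: "p > 0" using p_gt1 by simp
lemma q_pos: "q > 0" using q_gt1 by simp
lemma inverse_sum: "1/p + 1/q = 1" unfolding q_eq using p_gt1 by (simp add: field_simps)
lemma q_minus_1_times_p: "(q - 1) * p = q" unfolding q_eq using p_gt1 by (simp add: field_simps)

lemma swap: "conjugate_exponents q p"
proof
  show "q > 1" by (rule q_gt1)
  have "p - 1 \<noteq> 0" using p_gt1 by simp
  thus "p = q / (q - 1)" unfolding q_eq by (simp add: field_simps)
qed

lemma sub_div_p: "x - x / p = x / q"
proof -
  have "1/q = 1 - 1/p" using inverse_sum by linarith
  hence "x / q = x * (1 - 1/p)" by (metis times_divide_eq_right mult.right_neutral)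
  thus ?thesis by (simp add: right_diff_distrib)
qed

lemma young_scaled:
  fixes w z :: "'a::real_inner"
  assumes c: "c > 0"
  shows "z \<bullet> w \<le> c * norm w powr p / p + c powr (1 - q) * norm z powr q / q"
proof -
  have qp: "q / p = q - 1" using q_minus_1_times_p p_gt1 by (simp add: field_simps)
  have "z \<bullet> w \<le> norm w * norm z" by (metis inner_commute norm_cauchy_schwarz)
  also have "\<dots> = (c powr (1/p) * norm w) * (c powr (- (1/p)) * norm z)"
    using c by (simp add: powr_minus field_simps)
  also have "\<dots> \<le> (c powr (1/p) * norm w) powr p / p + (c powr (- (1/p)) * norm z) powr q / q"
    using Youngs_inequality[OF p_gt1 q_gt1 inverse_sum] c by simp
  also have "(c powr (1/p) * norm w) powr p = c * norm w powr p"
    using c p_gt1 by (simp add: powr_mult powr_powr)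
  also have "(c powr (- (1/p)) * norm z) powr q = c powr (1 - q) * norm z powr q"
    using c qp by (simp add: powr_mult powr_powr)
  finally show ?thesis .
qed

lemma young_scaled_attained:
  fixes z :: "'a::real_inner"
  assumes c: "c > 0"
  shows "\<exists>w. z \<bullet> w - c * norm w powr p / p = c powr (1 - q) * norm z powr q / q"
proof (cases "z = 0")
  case True thus ?thesis using q_pos by (intro exI[of _ 0]) simp
next
  case False
  define n where "n = norm z"
  have n: "n > 0" using False by (simp add: n_def)
  define t where "t = (n / c) powr (q - 1)"
  have t: "t > 0" using n c by (simp add: t_def)
  define X where "X = c powr (1 - q) * n powr q"
  have c_inv: "c powr (1 - q) = 1 / c powr (q - 1)"
    using powr_minus_divide[of c "q - 1"] by simp
  have "n * t = (n * n powr (q - 1)) / c powr (q - 1)"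
    using n c by (simp add: t_def powr_divide)
  also have "n * n powr (q - 1) = n powr q"
    using n by (simp add: powr_mult_base)
  finally have nt: "n * t = X" by (simp add: X_def c_inv)
  have "c * t powr p = c * (n / c) powr q"
    by (simp add: t_def powr_powr q_minus_1_times_p)
  also have "\<dots> = n powr q * (c / c powr q)"
    using n c by (simp add: powr_divide)
  also have "c / c powr q = c powr (1 - q)"
    using c by (simp add: powr_diff)
  finally have ct: "c * t powr p = X" by (simp add: X_def mult.commute)
  define w where "w = (t / n) *\<^sub>R z"
  have "z \<bullet> w = n * t" using n by (simp add: w_def n_def power2_norm_eq_inner[symmetric] power2_eq_square)
  moreover have "norm w = t" using n t by (simp add: w_def n_def)
  ultimately have "z \<bullet> w - c * norm w powr p / p = X - X / p" using nt ct by simp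
  thus ?thesis using sub_div_p by (intro exI[of _ w]) (simp add: X_def n_def)
qed

lemma young_scaled_sharp:
  fixes z :: "'a::real_inner"
  assumes c: "c > 0" and le: "\<And>w. z \<bullet> w - c * norm w powr p / p \<le> X"
  shows "c powr (1 - q) * norm z powr q / q \<le> X"
proof -
  obtain w where "z \<bullet> w - c * norm w powr p / p = c powr (1 - q) * norm z powr q / q"
    using young_scaled_attained[OF c] by blast
  thus ?thesis using le[of w] by simp
qed

end

locale p_gauge = conjugate_exponents +
  fixes f :: "'a::euclidean_space \<Rightarrow> real"
  assumes nonneg: "\<And>w. 0 \<le> f w"
    and convex: "convex_on UNIV f"
    and homogeneous: "\<And>t w. f (t *\<^sub>R w) = \<bar>t\<bar> powr p * f w"
    and positive: "\<And>w. w \<noteq> 0 \<Longrightarrow> 0 < f w"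
begin

lemma zero [simp]: "f 0 = 0" using homogeneous[of 0 0] p_gt1 by simp
lemma uminus: "f (- w) = f w" using homogeneous[of "-1" w] by simp

lemma continuous: "continuous_on UNIV f"
  using convex_on_continuous[OF open_UNIV convex] .

lemma scale_to_sphere: "w \<noteq> 0 \<Longrightarrow> f w = norm w powr p * f (w /\<^sub>R norm w)"
  using homogeneous[of "norm w" "w /\<^sub>R norm w"] by simp

text \<open>Comparison with \<open>|w|^p\<close> from above and below, via the extrema of \<open>f\<close> on the
  (compact) unit sphere.\<close>
lemma bounded_below: "\<exists>m>0. \<forall>w. m * norm w powr p \<le> f w"
proof -
  have "compact (sphere (0::'a) 1)" "sphere (0::'a) 1 \<noteq> {}" by auto
  then obtain u where u: "u \<in> sphere 0 1" "\<forall>y\<in>sphere 0 1. f u \<le> f y"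
    using continuous_attains_inf[of "sphere (0::'a) 1" f] continuous_on_subset[OF continuous] by blast
  have "f u * norm w powr p \<le> f w" for w
  proof (cases "w = 0")
    case False
    have "f u * norm w powr p \<le> f (w /\<^sub>R norm w) * norm w powr p"
      using u \<open>w \<noteq> 0\<close> by (intro mult_right_mono) auto
    thus ?thesis using scale_to_sphere[OF False] by (simp add: mult.commute)
  qed simp
  moreover have "f u > 0" using u(1) by (intro positive) auto
  ultimately show ?thesis by blast
qed

lemma bounded_above: "\<exists>M>0. \<forall>w. f w \<le> M * norm w powr p"
proof -
  have "compact (sphere (0::'a) 1)" "sphere (0::'a) 1 \<noteq> {}" by auto
  then obtain u where u: "u \<in> sphere 0 1" "\<forall>y\<in>sphere 0 1. f y \<le> f u"
    using continuous_attains_sup[of "sphere (0::'a) 1" f] continuous_on_subset[OF continuous] by blast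
  have "f w \<le> f u * norm w powr p" for w
  proof (cases "w = 0")
    case False
    have "f (w /\<^sub>R norm w) * norm w powr p \<le> f u * norm w powr p"
      using u \<open>w \<noteq> 0\<close> by (intro mult_right_mono) auto
    thus ?thesis using scale_to_sphere[OF False] by (simp add: mult.commute)
  qed simp
  moreover have "f u > 0" using u(1) by (intro positive) auto
  ultimately show ?thesis by blast
qed

definition unit_ball :: "'a set" where "unit_ball = {w. f w \<le> 1}"

lemma zero_in_unit_ball: "0 \<in> unit_ball" by (simp add: unit_ball_def)

lemma closed_unit_ball: "closed unit_ball"
  unfolding unit_ball_def by (rule closed_Collect_le[OF continuous continuous_on_const])

lemma convex_unit_ball: "convex unit_ball"
proof -
  have "f (u *\<^sub>R x + v *\<^sub>R y) \<le> 1"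
    if "f x \<le> 1" "f y \<le> 1" "0 \<le> u" "0 \<le> v" "u + v = 1" for x y u v
    using convex_lower[OF convex, of x y u v] that by simp
  thus ?thesis unfolding convex_def unit_ball_def by blast
qed

lemma bounded_unit_ball: "bounded unit_ball"
proof -
  obtain m where m: "m > 0" "\<forall>w. m * norm w powr p \<le> f w" using bounded_below by blast
  have "norm w \<le> max 1 (1/m)" if "w \<in> unit_ball" for w
  proof (rule ccontr)
    assume "\<not> ?thesis"
    hence w1: "norm w > 1" "norm w > 1/m" by auto
    have "norm w powr 1 \<le> norm w powr p" using w1 p_gt1 by (intro powr_mono) auto
    hence "m * norm w \<le> m * norm w powr p" using m by simp
    also have "\<dots> \<le> 1" using m that unfolding unit_ball_def by (metis mem_Collect_eq order_trans)
    finally show False using w1 m by (simp add: field_simps)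
  qed
  thus ?thesis unfolding bounded_iff by blast
qed

lemma compact_unit_ball: "compact unit_ball"
  using closed_unit_ball bounded_unit_ball compact_eq_bounded_closed by blast

text \<open>The dual norm, i.e.\ the support function of the unit ball; the supremum is a
  maximum by compactness.\<close>
definition dual :: "'a \<Rightarrow> real" where "dual z = Sup ((\<lambda>w. w \<bullet> z) ` unit_ball)"

lemma dual_attained: "\<exists>w\<in>unit_ball. w \<bullet> z = dual z \<and> (\<forall>v\<in>unit_ball. v \<bullet> z \<le> dual z)"
proof -
  obtain w where w: "w \<in> unit_ball" "\<forall>v\<in>unit_ball. v \<bullet> z \<le> w \<bullet> z"
    using continuous_attains_sup[OF compact_unit_ball, of "\<lambda>w. w \<bullet> z"] zero_in_unit_ball
      continuous_on_inner[OF continuous_on_id continuous_on_const]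
    by blast
  have "dual z = w \<bullet> z" unfolding dual_def using w by (intro cSup_eq_maximum) auto
  thus ?thesis using w by auto
qed

lemma dual_ge: "v \<in> unit_ball \<Longrightarrow> v \<bullet> z \<le> dual z" using dual_attained by blast
lemma dual_nonneg: "0 \<le> dual z" using dual_ge[OF zero_in_unit_ball] by simp

definition fnorm :: "'a \<Rightarrow> real" where "fnorm w = f w powr (1/p)"

lemma fnorm_nonneg: "0 \<le> fnorm w" by (simp add: fnorm_def)
lemma fnorm_powr: "fnorm w powr p = f w" using p_gt1 nonneg[of w] by (simp add: fnorm_def powr_powr)
lemma fnorm_pos: "w \<noteq> 0 \<Longrightarrow> 0 < fnorm w" using positive[of w] by (simp add: fnorm_def)
lemma fnorm_zero [simp]: "fnorm 0 = 0" by (simp add: fnorm_def)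
lemma fnorm_eq_0: "fnorm w = 0 \<longleftrightarrow> w = 0" using fnorm_pos fnorm_zero by force
lemma fnorm_scale: "fnorm (c *\<^sub>R w) = \<bar>c\<bar> * fnorm w"
  using p_gt1 by (simp add: fnorm_def homogeneous powr_mult powr_powr)

lemma f_normalized: assumes "w \<noteq> 0" shows "f (w /\<^sub>R fnorm w) = 1"
proof -
  have n: "fnorm w > 0" using fnorm_pos[OF assms] .
  have "f (w /\<^sub>R fnorm w) = inverse (fnorm w) powr p * f w" using homogeneous n by simp
  also have "\<dots> = inverse (fnorm w powr p) * fnorm w powr p" by (simp add: fnorm_powr inverse_powr)
  also have "\<dots> = 1" using n by simp
  finally show ?thesis .
qed

lemma normalized_in_unit_ball: "w \<noteq> 0 \<Longrightarrow> w /\<^sub>R fnorm w \<in> unit_ball"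
  using f_normalized by (simp add: unit_ball_def)

lemma fnorm_le_1: "w \<in> unit_ball \<Longrightarrow> fnorm w \<le> 1"
  using powr_mono2[of "1/p" "f w" 1] p_gt1 nonneg[of w] by (simp add: fnorm_def unit_ball_def)

lemma inner_le_fnorm_dual: "w \<bullet> z \<le> fnorm w * dual z"
proof (cases "w = 0")
  case False
  have n: "fnorm w > 0" using fnorm_pos[OF False] .
  have "(w /\<^sub>R fnorm w) \<bullet> z \<le> dual z" using dual_ge[OF normalized_in_unit_ball[OF False]] .
  hence "(w \<bullet> z) / fnorm w \<le> dual z" by (simp add: divide_inverse mult.commute)
  thus ?thesis using n by (simp add: divide_le_eq mult.commute)
qed simp

lemma fenchel_young: "w \<bullet> z \<le> f w / p + dual z powr q / q"
proof -
  have "fnorm w * dual z \<le> fnorm w powr p / p + dual z powr q / q"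
    using Youngs_inequality[OF p_gt1 q_gt1 inverse_sum fnorm_nonneg dual_nonneg] .
  thus ?thesis using inner_le_fnorm_dual[of w z] by (simp add: fnorm_powr)
qed

text \<open>Equality in the Fenchel--Young inequality is attained at a rescaled maximiser
  of the dual norm.\<close>
lemma fenchel_young_attained: "\<exists>w. dual z powr q / q \<le> z \<bullet> w - f w / p"
proof (cases "dual z = 0")
  case True thus ?thesis by (intro exI[of _ 0]) simp
next
  case False
  hence d: "dual z > 0" using dual_nonneg by (simp add: order_less_le)
  obtain w0 where w0: "w0 \<in> unit_ball" "w0 \<bullet> z = dual z" using dual_attained by blast
  define w where "w = dual z powr (q - 1) *\<^sub>R w0"
  have zw: "z \<bullet> w = dual z powr q" using d
    by (simp add: w_def inner_commute w0 powr_diff)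
  have "f w = (dual z powr (q - 1)) powr p * f w0" by (simp add: w_def homogeneous)
  also have "\<dots> = dual z powr q * f w0" by (simp add: powr_powr q_minus_1_times_p)
  also have "\<dots> \<le> dual z powr q" using w0 unit_ball_def by (simp add: mult_left_le)
  finally have "f w \<le> dual z powr q" .
  hence "dual z powr q - dual z powr q / p \<le> z \<bullet> w - f w / p" using p_gt1 zw
    by (simp add: divide_right_mono)
  thus ?thesis using sub_div_p by auto
qed

lemma legendre_transform: "(SUP w. ereal (z \<bullet> w - f w / p)) = ereal (dual z powr q / q)"
proof (rule antisym)
  show "(SUP w. ereal (z \<bullet> w - f w / p)) \<le> ereal (dual z powr q / q)"
  proof (rule SUP_least)
    fix w
    have "z \<bullet> w - f w / p \<le> dual z powr q / q"
      using fenchel_young[of w z] by (simp add: inner_commute)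
    thus "ereal (z \<bullet> w - f w / p) \<le> ereal (dual z powr q / q)" by simp
  qed
  obtain w where "dual z powr q / q \<le> z \<bullet> w - f w / p" using fenchel_young_attained by blast
  hence "ereal (dual z powr q / q) \<le> ereal (z \<bullet> w - f w / p)" by simp
  also have "\<dots> \<le> (SUP w. ereal (z \<bullet> w - f w / p))" by (rule SUP_upper) simp
  finally show "ereal (dual z powr q / q) \<le> (SUP w. ereal (z \<bullet> w - f w / p))" .
qed

text \<open>The \<open>p\<close>-th root of \<open>f\<close> is a norm: the triangle inequality is convexity of
  \<open>f\<close> applied to the normalised vectors.\<close>
lemma fnorm_triangle: "fnorm (x + y) \<le> fnorm x + fnorm y"
proof (cases "x = 0 \<or> y = 0")
  case False
  hence x: "x \<noteq> 0" and y: "y \<noteq> 0" by auto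
  define a b where "a = fnorm x" and "b = fnorm y"
  have a: "a > 0" and b: "b > 0" using fnorm_pos x y by (auto simp: a_def b_def)
  define t where "t = b / (a + b)"
  have t: "0 \<le> t" "t \<le> 1" "1 - t = a / (a + b)" using a b by (auto simp: t_def field_simps)
  define m where "m = (1 - t) *\<^sub>R (x /\<^sub>R a) + t *\<^sub>R (y /\<^sub>R b)"
  have "f m \<le> (1 - t) * f (x /\<^sub>R a) + t * f (y /\<^sub>R b)"
    unfolding m_def by (rule convex_onD[OF convex t(1,2) UNIV_I UNIV_I])
  also have "\<dots> = 1" using f_normalized x y by (simp add: a_def b_def)
  finally have m1: "f m \<le> 1" .
  have "x + y = (a + b) *\<^sub>R m"
    using a b t(3) by (simp add: m_def t_def scaleR_add_right)
  hence "fnorm (x + y) = (a + b) * fnorm m" using a b by (simp add: fnorm_scale)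
  also have "fnorm m \<le> 1" using m1 by (simp add: fnorm_le_1 unit_ball_def)
  hence "(a + b) * fnorm m \<le> a + b" using a b by (simp add: mult_left_le)
  finally show ?thesis by (simp add: a_def b_def)
qed auto

lemma fnorm_is_norm: "is_norm fnorm"
  unfolding is_norm_def using fnorm_nonneg fnorm_eq_0 fnorm_scale fnorm_triangle by blast

lemma dual_scale_nonneg: assumes "c \<ge> 0" shows "dual (c *\<^sub>R z) = c * dual z"
proof (rule antisym)
  obtain w where w: "w \<in> unit_ball" "w \<bullet> (c *\<^sub>R z) = dual (c *\<^sub>R z)" using dual_attained by blast
  have "c * (w \<bullet> z) \<le> c * dual z" using dual_ge[OF w(1)] assms by (rule mult_left_mono)
  thus "dual (c *\<^sub>R z) \<le> c * dual z" using w by simp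
  obtain v where v: "v \<in> unit_ball" "v \<bullet> z = dual z" using dual_attained by blast
  show "c * dual z \<le> dual (c *\<^sub>R z)" using dual_ge[OF v(1), of "c *\<^sub>R z"] v by simp
qed

lemma dual_uminus: "dual (- z) = dual z"
proof -
  have le: "dual (- z) \<le> dual z" for z
  proof -
    obtain w where w: "w \<in> unit_ball" "w \<bullet> (- z) = dual (- z)" using dual_attained by blast
    have "- w \<in> unit_ball" using w uminus by (simp add: unit_ball_def)
    thus ?thesis using dual_ge[of "- w" z] w by simp
  qed
  show ?thesis using le[of z] le[of "- z"] by simp
qed

lemma dual_scale: "dual (c *\<^sub>R z) = \<bar>c\<bar> * dual z"
proof (cases "c \<ge> 0")
  case True thus ?thesis by (simp add: dual_scale_nonneg)
next
  case False
  have "dual (c *\<^sub>R z) = dual ((- c) *\<^sub>R (- z))" by simp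
  also have "\<dots> = (- c) * dual (- z)" by (rule dual_scale_nonneg) (use False in simp)
  finally show ?thesis using False by (simp add: dual_uminus)
qed

lemma dual_zero [simp]: "dual 0 = 0" using dual_scale[of 0 0] by simp

lemma dual_pos: assumes "z \<noteq> 0" shows "dual z > 0"
proof -
  have "(z /\<^sub>R fnorm z) \<bullet> z \<le> dual z" using dual_ge[OF normalized_in_unit_ball[OF assms]] .
  moreover have "(z /\<^sub>R fnorm z) \<bullet> z > 0" using assms fnorm_pos[OF assms] by simp
  ultimately show ?thesis by linarith
qed

lemma dual_triangle: "dual (x + y) \<le> dual x + dual y"
proof -
  obtain w where "w \<in> unit_ball" "w \<bullet> (x + y) = dual (x + y)" using dual_attained by blast
  thus ?thesis using dual_ge[of w x] dual_ge[of w y] by (simp add: inner_add_right)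
qed

lemma dual_is_norm: "is_norm dual"
  unfolding is_norm_def using dual_nonneg dual_pos dual_zero dual_scale dual_triangle
  by (metis less_irrefl)

lemma nonzero_vector_exists: "\<exists>w::'a. w \<noteq> 0"
  using nonzero_Basis SOME_Basis by blast

lemma dual_as_sup: "(SUP w\<in>-{0}. ereal ((w \<bullet> z) / fnorm w)) = ereal (dual z)"
proof (rule antisym)
  show "(SUP w\<in>-{0}. ereal ((w \<bullet> z) / fnorm w)) \<le> ereal (dual z)"
  proof (rule SUP_least)
    fix w :: 'a assume "w \<in> - {0}"
    hence "fnorm w > 0" using fnorm_pos by auto
    thus "ereal ((w \<bullet> z) / fnorm w) \<le> ereal (dual z)" using inner_le_fnorm_dual[of w z]
      by (simp add: divide_le_eq mult.commute)
  qed
  show "ereal (dual z) \<le> (SUP w\<in>-{0}. ereal ((w \<bullet> z) / fnorm w))"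
  proof (cases "z = 0")
    case True
    obtain w :: 'a where "w \<noteq> 0" using nonzero_vector_exists by blast
    hence "ereal ((w \<bullet> z) / fnorm w) \<le> (SUP w\<in>-{0}. ereal ((w \<bullet> z) / fnorm w))"
      by (intro SUP_upper) auto
    thus ?thesis using True by simp
  next
    case False
    obtain w where w: "w \<in> unit_ball" "w \<bullet> z = dual z" using dual_attained by blast
    have d: "dual z > 0" using dual_pos[OF False] .
    hence wn: "w \<noteq> 0" using w by auto
    have n: "fnorm w > 0" "fnorm w \<le> 1" using fnorm_pos[OF wn] fnorm_le_1[OF w(1)] by auto
    have "dual z \<le> (w \<bullet> z) / fnorm w" using n d w by (simp add: le_divide_eq mult_left_le)
    hence "ereal (dual z) \<le> ereal ((w \<bullet> z) / fnorm w)" by simp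
    also have "\<dots> \<le> (SUP w\<in>-{0}. ereal ((w \<bullet> z) / fnorm w))" using wn by (intro SUP_upper) auto
    finally show ?thesis .
  qed
qed

text \<open>Every nonzero \<open>w\<close> has a norming functional: a supporting hyperplane of the unit
  ball at \<open>w / fnorm w\<close>, which lies on its boundary.\<close>
lemma norming_functional:
  assumes "w \<noteq> 0" shows "\<exists>z. z \<noteq> 0 \<and> w \<bullet> z = fnorm w * dual z"
proof -
  define u where "u = w /\<^sub>R fnorm w"
  have n: "fnorm w > 0" using fnorm_pos[OF assms] .
  have fu: "f u = 1" using f_normalized[OF assms] by (simp add: u_def)
  hence uB: "u \<in> unit_ball" by (simp add: unit_ball_def)
  have "open {v. f v < 1}" by (rule open_Collect_less[OF continuous continuous_on_const])
  moreover have "{v. f v < 1} \<subseteq> unit_ball" by (auto simp: unit_ball_def)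
  ultimately have "{v. f v < 1} \<subseteq> interior unit_ball" by (simp add: interior_maximal)
  hence "0 \<in> interior unit_ball" by auto
  hence ri: "rel_interior unit_ball = interior unit_ball"
    using rel_interior_nonempty_interior by blast
  have "u \<notin> interior unit_ball"
  proof
    assume "u \<in> interior unit_ball"
    then obtain e where e: "e > 0" "ball u e \<subseteq> unit_ball" using mem_interior by blast
    have nu: "norm u > 0" using fu by (cases "u = 0") auto
    define s where "s = 1 + e / (2 * norm u)"
    have "dist u (s *\<^sub>R u) = e / 2"
      using nu e by (simp add: s_def dist_norm algebra_simps)
    hence "s *\<^sub>R u \<in> unit_ball" using e by auto
    moreover have "f (s *\<^sub>R u) = s powr p" using fu nu e by (simp add: homogeneous s_def)
    moreover have "s powr p > 1" using nu e p_gt1 by (intro gr_one_powr) (auto simp: s_def)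
    ultimately show False by (simp add: unit_ball_def)
  qed
  with ri have "u \<notin> rel_interior unit_ball" by simp
  moreover have "u \<in> closure unit_ball" using uB closure_subset by blast
  ultimately obtain a where a: "a \<noteq> 0" "\<And>y. y \<in> closure unit_ball \<Longrightarrow> a \<bullet> u \<le> a \<bullet> y"
    using supporting_hyperplane_relative_frontier[OF convex_unit_ball] by blast
  have "y \<bullet> (- a) \<le> u \<bullet> (- a)" if "y \<in> unit_ball" for y
    using a(2)[of y] that closure_subset by (auto simp: inner_commute)
  moreover obtain y where "y \<in> unit_ball" "y \<bullet> (- a) = dual (- a)" using dual_attained by blast
  ultimately have "u \<bullet> (- a) = dual (- a)" using dual_ge[OF uB, of "- a"] by force
  thus ?thesis using a(1) n by (intro exI[of _ "- a"]) (simp add: u_def field_simps)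
qed

lemma fnorm_as_sup: "(SUP z\<in>-{0}. ereal ((w \<bullet> z) / dual z)) = ereal (fnorm w)"
proof (rule antisym)
  show "(SUP z\<in>-{0}. ereal ((w \<bullet> z) / dual z)) \<le> ereal (fnorm w)"
  proof (rule SUP_least)
    fix z :: 'a assume "z \<in> - {0}"
    hence "dual z > 0" using dual_pos by auto
    thus "ereal ((w \<bullet> z) / dual z) \<le> ereal (fnorm w)" using inner_le_fnorm_dual[of w z]
      by (simp add: divide_le_eq)
  qed
  show "ereal (fnorm w) \<le> (SUP z\<in>-{0}. ereal ((w \<bullet> z) / dual z))"
  proof (cases "w = 0")
    case True
    obtain z :: 'a where "z \<noteq> 0" using nonzero_vector_exists by blast
    hence "ereal ((w \<bullet> z) / dual z) \<le> (SUP z\<in>-{0}. ereal ((w \<bullet> z) / dual z))"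
      by (intro SUP_upper) auto
    thus ?thesis using True by simp
  next
    case False
    obtain z where z: "z \<noteq> 0" "w \<bullet> z = fnorm w * dual z" using norming_functional[OF False] by blast
    hence "(w \<bullet> z) / dual z = fnorm w" using dual_pos[OF z(1)] by simp
    hence "ereal (fnorm w) = ereal ((w \<bullet> z) / dual z)" by simp
    also have "\<dots> \<le> (SUP z\<in>-{0}. ereal ((w \<bullet> z) / dual z))" using z by (intro SUP_upper) auto
    finally show ?thesis .
  qed
qed

lemma biconjugate: "(SUP z. ereal (w \<bullet> z - dual z powr q / q)) = ereal (f w / p)"
proof (rule antisym)
  show "(SUP z. ereal (w \<bullet> z - dual z powr q / q)) \<le> ereal (f w / p)"
  proof (rule SUP_least)
    fix z
    show "ereal (w \<bullet> z - dual z powr q / q) \<le> ereal (f w / p)"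
      using fenchel_young[of w z] by simp
  qed
  show "ereal (f w / p) \<le> (SUP z. ereal (w \<bullet> z - dual z powr q / q))"
  proof (cases "w = 0")
    case True
    have "ereal (w \<bullet> 0 - dual 0 powr q / q) \<le> (SUP z. ereal (w \<bullet> z - dual z powr q / q))"
      by (rule SUP_upper) simp
    thus ?thesis using True by simp
  next
    case False
    obtain z0 where z0: "z0 \<noteq> 0" "w \<bullet> z0 = fnorm w * dual z0"
      using norming_functional[OF False] by blast
    have d: "dual z0 > 0" using dual_pos[OF z0(1)] .
    have n: "fnorm w > 0" using fnorm_pos[OF False] .
    define z where "z = (fnorm w powr (p - 1) / dual z0) *\<^sub>R z0"
    have "dual z = fnorm w powr (p - 1)" using d by (simp add: z_def dual_scale)
    hence Dq: "dual z powr q = fnorm w powr p"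
      using conjugate_exponents.q_minus_1_times_p[OF swap] by (simp add: powr_powr mult.commute)
    have wz: "w \<bullet> z = fnorm w powr p"
      using z0(2) d n by (simp add: z_def powr_diff)
    have "ereal (f w / p) = ereal (w \<bullet> z - dual z powr q / q)"
      using wz Dq conjugate_exponents.sub_div_p[OF swap] by (simp add: fnorm_powr)
    also have "\<dots> \<le> (SUP z. ereal (w \<bullet> z - dual z powr q / q))" by (rule SUP_upper) simp
    finally show ?thesis .
  qed
qed

lemma dual_powr_upper:
  assumes m: "m > 0" and lower: "\<And>w. m * norm w powr p \<le> f w"
  shows "dual z powr q \<le> m powr (1 - q) * norm z powr q"
proof -
  obtain w where "dual z powr q / q \<le> z \<bullet> w - f w / p" using fenchel_young_attained by blast
  also have "\<dots> \<le> z \<bullet> w - m * norm w powr p / p"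
    using lower[of w] p_pos by (simp add: divide_right_mono)
  also have "\<dots> \<le> m powr (1 - q) * norm z powr q / q"
    using young_scaled[OF m, of z w] by simp
  finally show ?thesis using q_pos by (simp add: divide_le_cancel)
qed

lemma dual_powr_lower:
  assumes M: "M > 0" and upper: "\<And>w. f w \<le> M * norm w powr p"
  shows "M powr (1 - q) * norm z powr q \<le> dual z powr q"
proof -
  have "M powr (1 - q) * norm z powr q / q \<le> dual z powr q / q"
  proof (rule young_scaled_sharp[OF M])
    fix w
    have "z \<bullet> w - M * norm w powr p / p \<le> z \<bullet> w - f w / p"
      using upper[of w] p_pos by (simp add: divide_right_mono)
    also have "\<dots> \<le> dual z powr q / q" using fenchel_young[of w z] by (simp add: inner_commute)
    finally show "z \<bullet> w - M * norm w powr p / p \<le> dual z powr q / q" .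
  qed
  thus ?thesis using q_pos by (simp add: divide_le_cancel)
qed

end

text \<open>A nonnegative concave function on \<open>(0,\<infinity>)\<close> grows at most linearly: \<open>1\<close> is the
  convex combination of \<open>\<rho>\<close> and \<open>1/\<rho>\<close> with weights \<open>1/(1+\<rho>)\<close> and \<open>\<rho>/(1+\<rho>)\<close>, so
  concavity gives \<open>g \<rho> / (1+\<rho>) \<le> g 1\<close>.\<close>
lemma concave_nonneg_linear_growth:
  fixes g :: "real \<Rightarrow> real"
  assumes conc: "concave_on {0<..} g" and nonneg: "\<And>x. 0 < x \<Longrightarrow> 0 \<le> g x" and \<rho>: "0 < \<rho>"
  shows "g \<rho> \<le> (1 + \<rho>) * g 1"
proof -
  define u v where "u = 1 / (1 + \<rho>)" and "v = \<rho> / (1 + \<rho>)"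
  have uv: "0 \<le> u" "0 \<le> v" "u + v = 1" using \<rho> by (auto simp: u_def v_def field_simps)
  have comb: "u *\<^sub>R \<rho> + v *\<^sub>R (1/\<rho>) = 1" using \<rho> by (simp add: u_def v_def field_simps)
  have "u * g \<rho> + v * g (1/\<rho>) \<le> g (u *\<^sub>R \<rho> + v *\<^sub>R (1/\<rho>))"
    using conc[unfolded concave_on_iff, THEN conjunct2, rule_format, of \<rho> "1/\<rho>" u v] \<rho> uv
    by simp
  moreover have "0 \<le> v * g (1/\<rho>)" using uv \<rho> nonneg[of "1/\<rho>"] by simp
  ultimately have "u * g \<rho> \<le> g 1" using comb by simp
  thus ?thesis using \<rho> by (simp add: u_def field_simps)
qed

lemma divide_le_mult_of_inverse_le:
  fixes X \<alpha> C :: real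
  assumes "0 \<le> X" "0 < \<alpha>" "1 / \<alpha> \<le> C"
  shows "X / C \<le> \<alpha> * X"
proof -
  have "0 < 1 / \<alpha>" using assms by simp
  hence C: "C > 0" using assms(3) by linarith
  have "1 \<le> \<alpha> * C" using assms by (simp add: divide_le_eq mult.commute)
  from mult_left_mono[OF this assms(1)] have "X \<le> \<alpha> * X * C" by (simp add: algebra_simps)
  thus ?thesis using C by (simp add: divide_le_eq)
qed

locale admissible_density = conjugate_exponents +
  fixes \<phi> :: "real \<Rightarrow> 'a::euclidean_space \<Rightarrow> real"
  assumes admissible: "admissible p \<phi>"
begin

abbreviation \<psi> :: "real \<Rightarrow> 'a \<Rightarrow> real" where "\<psi> \<equiv> legendre p q \<phi>"

lemma nonneg: "0 < \<rho> \<Longrightarrow> 0 \<le> \<phi> \<rho> w"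
  using admissible by (simp add: admissible_def)

lemma homogeneous: "0 < \<rho> \<Longrightarrow> \<phi> \<rho> (t *\<^sub>R w) = \<bar>t\<bar> powr p * \<phi> \<rho> w"
  using admissible by (simp add: admissible_def)

lemma at_zero [simp]: "0 < \<rho> \<Longrightarrow> \<phi> \<rho> 0 = 0"
  using homogeneous[of \<rho> 0 0] by simp

lemma jointly_convex:
  assumes "0 < \<rho>1" "0 < \<rho>2" "0 \<le> u" "0 \<le> v" "u + v = 1"
  shows "\<phi> (u * \<rho>1 + v * \<rho>2) (u *\<^sub>R w1 + v *\<^sub>R w2) \<le> u * \<phi> \<rho>1 w1 + v * \<phi> \<rho>2 w2"
proof -
  have "convex_on ({0<..} \<times> UNIV) (\<lambda>x. \<phi> (fst x) (snd x))"
    using admissible by (simp add: admissible_def)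
  from this[unfolded convex_on_def] assms show ?thesis by fastforce
qed

lemma convex_in_w: "0 < \<rho> \<Longrightarrow> convex_on UNIV (\<phi> \<rho>)"
  unfolding convex_on_def
  using jointly_convex[of \<rho> \<rho>] by (simp add: distrib_right[symmetric])

lemma convex_in_rho: "convex_on {0<..} (\<lambda>\<rho>. \<phi> \<rho> w)"
  unfolding convex_on_def
proof (intro conjI ballI allI impI convex_real_interval)
  fix x y u v :: real assume h: "x \<in> {0<..}" "y \<in> {0<..}" "0 \<le> u" "0 \<le> v" "u + v = 1"
  have "u *\<^sub>R w + v *\<^sub>R w = w" using h(5) by (simp add: scaleR_add_left[symmetric])
  thus "\<phi> (u *\<^sub>R x + v *\<^sub>R y) w \<le> u * \<phi> x w + v * \<phi> y w"
    using jointly_convex[of x y u v w w] h by simp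
qed

text \<open>The key consequence of joint convexity and homogeneity: moving \<open>\<rho>\<close> towards an
  arbitrary other density \<open>R\<close> costs at most a factor \<open>\<theta>^(1-p)\<close>.  (Convexity along the
  segment from \<open>(\<rho>, w/\<theta>)\<close> to \<open>(R, 0)\<close>.)\<close>
lemma perspective_bound:
  assumes \<theta>: "0 < \<theta>" "\<theta> \<le> 1" and \<rho>: "0 < \<rho>" and R: "0 < R"
  shows "\<phi> (\<theta> * \<rho> + (1 - \<theta>) * R) w \<le> \<theta> powr (1 - p) * \<phi> \<rho> w"
proof -
  have "\<phi> (\<theta> * \<rho> + (1 - \<theta>) * R) (\<theta> *\<^sub>R ((1/\<theta>) *\<^sub>R w) + (1 - \<theta>) *\<^sub>R 0)
        \<le> \<theta> * \<phi> \<rho> ((1/\<theta>) *\<^sub>R w) + (1 - \<theta>) * \<phi> R 0"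
    using \<theta> \<rho> R by (intro jointly_convex) auto
  also have "\<dots> = \<theta> * ((1/\<theta>) powr p * \<phi> \<rho> w)" using \<theta> \<rho> R by (simp add: homogeneous)
  also have "\<dots> = \<theta> powr (1 - p) * \<phi> \<rho> w"
    using \<theta> by (simp add: powr_divide powr_diff)
  finally show ?thesis using \<theta> by simp
qed

text \<open>Hence \<open>\<phi>\<close> is nonincreasing in \<open>\<rho>\<close>: otherwise a suitable \<open>\<theta>\<close> close to \<open>1\<close> would
  contradict the perspective bound.\<close>
lemma antimono:
  assumes \<rho>: "0 < \<rho>1" "\<rho>1 \<le> \<rho>2"
  shows "\<phi> \<rho>2 w \<le> \<phi> \<rho>1 w"
proof (rule ccontr)
  assume neg: "\<not> ?thesis"
  define f1 f2 where "f1 = \<phi> \<rho>1 w" and "f2 = \<phi> \<rho>2 w"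
  have gt: "f1 < f2" using neg by (simp add: f1_def f2_def)
  have f1: "0 \<le> f1" using nonneg[OF \<rho>(1)] by (simp add: f1_def)
  have f2: "0 < f2" using f1 gt by simp
  have lt: "\<rho>1 < \<rho>2" using gt \<rho> by (cases "\<rho>1 = \<rho>2") (auto simp: f1_def f2_def)
  define r where "r = (1 + f1 / f2) / 2"
  have r: "0 < r" "r < 1" "f1 / f2 < r" using f1 f2 gt by (auto simp: r_def field_simps)
  define \<theta> where "\<theta> = r powr (1 / (p - 1))"
  have \<theta>: "0 < \<theta>" "\<theta> < 1" using r p_gt1 powr_less_mono2[of "1/(p-1)" r 1] by (auto simp: \<theta>_def)
  have e: "1 / (p - 1) * (1 - p) = -1" using p_gt1 by (simp add: field_simps)
  have \<theta>r: "\<theta> powr (1 - p) = 1 / r"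
    unfolding \<theta>_def powr_powr e using r by (simp add: powr_minus_divide)
  define R where "R = (\<rho>2 - \<theta> * \<rho>1) / (1 - \<theta>)"
  have "\<theta> * \<rho>1 < \<rho>1" using \<theta> \<rho> by simp
  hence R: "R > 0" using \<theta> lt by (simp add: R_def)
  have "\<theta> * \<rho>1 + (1 - \<theta>) * R = \<rho>2" using \<theta> by (simp add: R_def)
  hence "f2 \<le> f1 / r" using perspective_bound[of \<theta> \<rho>1 R w] \<theta> \<rho> R \<theta>r by (simp add: f1_def f2_def)
  hence "f2 * r \<le> f1" using r by (simp add: le_divide_eq)
  moreover have "f1 < r * f2" using r(3) f2 by (simp add: divide_less_eq)
  ultimately show False by (simp add: mult.commute)
qed

text \<open>Positivity at the single density \<open>\<rho>0\<close> propagates to all densities: downwards by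
  monotonicity, upwards by the perspective bound.\<close>
lemma positive:
  assumes \<rho>: "0 < \<rho>" and w: "w \<noteq> 0"
  shows "0 < \<phi> \<rho> w"
proof -
  obtain \<rho>0 where \<rho>0: "\<rho>0 > 0" "\<phi> \<rho>0 w > 0" using admissible w by (auto simp: admissible_def)
  show ?thesis
  proof (cases "\<rho> \<le> \<rho>0")
    case True thus ?thesis using antimono[OF \<rho> True, of w] \<rho>0 by linarith
  next
    case False
    define \<theta> where "\<theta> = \<rho>0 / (2 * \<rho>)"
    have \<theta>: "0 < \<theta>" "\<theta> < 1" using False \<rho>0 \<rho> by (auto simp: \<theta>_def field_simps)
    define R where "R = (\<rho>0 / 2) / (1 - \<theta>)"
    have R: "R > 0" using \<theta> \<rho>0 by (simp add: R_def)
    have "\<theta> * \<rho> + (1 - \<theta>) * R = \<rho>0" using \<theta> \<rho> by (simp add: R_def \<theta>_def field_simps)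
    hence "\<phi> \<rho>0 w \<le> \<theta> powr (1 - p) * \<phi> \<rho> w" using perspective_bound[of \<theta> \<rho> R w] \<theta> \<rho> R by simp
    thus ?thesis using \<rho>0(2) nonneg[OF \<rho>, of w] by (cases "\<phi> \<rho> w = 0") auto
  qed
qed

lemma slice_gauge: "0 < \<rho> \<Longrightarrow> p_gauge p q (\<phi> \<rho>)"
  by (intro p_gauge.intro conjugate_exponents_axioms p_gauge_axioms.intro)
     (auto simp: nonneg convex_in_w homogeneous positive)

lemma legendre_ereal_eq:
  "0 < \<rho> \<Longrightarrow> legendre_ereal p q \<phi> \<rho> z = ereal (p_gauge.dual (\<phi> \<rho>) z powr q)"
  using p_gauge.legendre_transform[OF slice_gauge] q_pos by (simp add: legendre_ereal_def)

lemma legendre_ereal_finite: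
  "\<forall>\<rho>>0. \<forall>z. legendre_ereal p q \<phi> \<rho> z \<noteq> \<infinity> \<and> 0 \<le> legendre_ereal p q \<phi> \<rho> z"
  by (simp add: legendre_ereal_eq)

lemma legendre_eq: "0 < \<rho> \<Longrightarrow> \<psi> \<rho> z = p_gauge.dual (\<phi> \<rho>) z powr q"
  by (simp add: legendre_def legendre_ereal_eq)

lemma legendre_root: "0 < \<rho> \<Longrightarrow> \<psi> \<rho> z powr (1/q) = p_gauge.dual (\<phi> \<rho>) z"
  using p_gauge.dual_nonneg[OF slice_gauge] q_pos by (simp add: legendre_eq powr_powr)

lemma legendre_nonneg: "0 < \<rho> \<Longrightarrow> 0 \<le> \<psi> \<rho> z"
  by (simp add: legendre_eq)

lemma legendre_positive: assumes "0 < \<rho>" "z \<noteq> 0" shows "0 < \<psi> \<rho> z"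
  using p_gauge.dual_pos[OF slice_gauge[OF assms(1)] assms(2)] assms(1) by (simp add: legendre_eq)

lemma legendre_scale: "0 < \<rho> \<Longrightarrow> \<psi> \<rho> (c *\<^sub>R z) = \<bar>c\<bar> powr q * \<psi> \<rho> z"
  using p_gauge.dual_scale[OF slice_gauge] by (simp add: legendre_eq powr_mult)

lemma fenchel_young: "0 < \<rho> \<Longrightarrow> z \<bullet> w - \<phi> \<rho> w / p \<le> \<psi> \<rho> z / q"
  using p_gauge.fenchel_young[OF slice_gauge] by (simp add: legendre_eq inner_commute algebra_simps)

lemma fenchel_young_attained: "0 < \<rho> \<Longrightarrow> \<exists>w. \<psi> \<rho> z / q \<le> z \<bullet> w - \<phi> \<rho> w / p"
  using p_gauge.fenchel_young_attained[OF slice_gauge] by (simp add: legendre_eq)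

lemma biconjugate:
  "0 < \<rho> \<Longrightarrow> ereal (\<phi> \<rho> w / p) = (SUP z. ereal (w \<bullet> z - \<psi> \<rho> z / q))"
  using p_gauge.biconjugate[OF slice_gauge] by (simp add: legendre_eq)

lemma dual_norms:
  "\<forall>\<rho>>0.
     is_norm (\<lambda>w. \<phi> \<rho> w powr (1/p)) \<and>
     is_norm (\<lambda>z. \<psi> \<rho> z powr (1/q)) \<and>
     (\<forall>z. ereal (\<psi> \<rho> z powr (1/q)) = (SUP w\<in>-{0}. ereal ((w \<bullet> z) / \<phi> \<rho> w powr (1/p)))) \<and>
     (\<forall>w. ereal (\<phi> \<rho> w powr (1/p)) = (SUP z\<in>-{0}. ereal ((w \<bullet> z) / \<psi> \<rho> z powr (1/q)))) \<and>
     (\<forall>c z. \<psi> \<rho> (c *\<^sub>R z) = \<bar>c\<bar> powr q * \<psi> \<rho> z)"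
  (is "\<forall>\<rho>>0. ?dual_pair \<rho>")
proof (intro allI impI)
  fix \<rho> :: real assume \<rho>: "0 < \<rho>"
  interpret p_gauge p q "\<phi> \<rho>" by (rule slice_gauge[OF \<rho>])
  have fnorm: "(\<lambda>w. \<phi> \<rho> w powr (1/p)) = fnorm" by (simp add: fnorm_def fun_eq_iff)
  have dual: "(\<lambda>z. \<psi> \<rho> z powr (1/q)) = dual" by (simp add: legendre_root[OF \<rho>] fun_eq_iff)
  show "?dual_pair \<rho>"
    using fnorm_is_norm dual_is_norm dual_as_sup fnorm_as_sup legendre_scale[OF \<rho>]
    by (simp add: fnorm[symmetric] dual[symmetric])
qed

text \<open>Part (2): as a supremum of functions that are affine in \<open>z\<close> and (by joint convexity
  of \<open>\<phi>\<close>) concave in \<open>\<rho>\<close>, the transform is convex in \<open>z\<close> and concave in \<open>\<rho>\<close>.\<close>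
lemma legendre_convex: "0 < \<rho> \<Longrightarrow> convex_on UNIV (\<psi> \<rho>)"
  unfolding convex_on_def
proof (intro conjI ballI allI impI convex_UNIV)
  fix z1 z2 :: 'a and u v :: real assume \<rho>: "0 < \<rho>" and h: "0 \<le> u" "0 \<le> v" "u + v = 1"
  obtain w where "\<psi> \<rho> (u *\<^sub>R z1 + v *\<^sub>R z2) / q \<le> (u *\<^sub>R z1 + v *\<^sub>R z2) \<bullet> w - \<phi> \<rho> w / p"
    using fenchel_young_attained[OF \<rho>] by blast
  also have "\<dots> = u * (z1 \<bullet> w - \<phi> \<rho> w / p) + v * (z2 \<bullet> w - \<phi> \<rho> w / p)"
    using h(3) by (simp add: algebra_simps,
                   simp add: add_divide_distrib[symmetric] distrib_right[symmetric])
  also have "\<dots> \<le> u * (\<psi> \<rho> z1 / q) + v * (\<psi> \<rho> z2 / q)"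
    using h fenchel_young[OF \<rho>] by (intro add_mono mult_left_mono) auto
  finally have "\<psi> \<rho> (u *\<^sub>R z1 + v *\<^sub>R z2) / q \<le> (u * \<psi> \<rho> z1 + v * \<psi> \<rho> z2) / q"
    by (simp add: add_divide_distrib)
  thus "\<psi> \<rho> (u *\<^sub>R z1 + v *\<^sub>R z2) \<le> u * \<psi> \<rho> z1 + v * \<psi> \<rho> z2"
    using q_pos by (simp add: divide_le_cancel)
qed

lemma legendre_concave: "concave_on {0<..} (\<lambda>\<rho>. \<psi> \<rho> z)"
  unfolding concave_on_iff
proof (intro conjI ballI allI impI convex_real_interval)
  fix x y u v :: real assume h: "x \<in> {0<..}" "y \<in> {0<..}" "0 \<le> u" "0 \<le> v" "u + v = 1"
  obtain w1 where w1: "\<psi> x z / q \<le> z \<bullet> w1 - \<phi> x w1 / p" using fenchel_young_attained h by auto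
  obtain w2 where w2: "\<psi> y z / q \<le> z \<bullet> w2 - \<phi> y w2 / p" using fenchel_young_attained h by auto
  have xy: "u * x + v * y > 0" using h by (cases "u = 0") (auto intro: add_pos_nonneg)
  have "u * (\<psi> x z / q) + v * (\<psi> y z / q) \<le> u * (z \<bullet> w1 - \<phi> x w1 / p) + v * (z \<bullet> w2 - \<phi> y w2 / p)"
    using w1 w2 h by (intro add_mono mult_left_mono) auto
  also have "\<dots> = z \<bullet> (u *\<^sub>R w1 + v *\<^sub>R w2) - (u * \<phi> x w1 + v * \<phi> y w2) / p"
    by (simp add: algebra_simps add_divide_distrib)
  also have "\<dots> \<le> z \<bullet> (u *\<^sub>R w1 + v *\<^sub>R w2) - \<phi> (u * x + v * y) (u *\<^sub>R w1 + v *\<^sub>R w2) / p"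
    using jointly_convex[of x y u v w1 w2] h p_pos by (simp add: divide_right_mono)
  also have "\<dots> \<le> \<psi> (u * x + v * y) z / q" using fenchel_young[OF xy] .
  finally have "(u * \<psi> x z + v * \<psi> y z) / q \<le> \<psi> (u * x + v * y) z / q"
    by (simp add: add_divide_distrib)
  thus "u * \<psi> x z + v * \<psi> y z \<le> \<psi> (u *\<^sub>R x + v *\<^sub>R y) z"
    using q_pos by (simp add: divide_le_cancel)
qed

text \<open>The transform is nondecreasing in \<open>\<rho>\<close>, dually to the monotonicity of \<open>\<phi>\<close>.\<close>
lemma legendre_mono:
  assumes \<rho>: "0 < \<rho>1" "\<rho>1 \<le> \<rho>2"
  shows "\<psi> \<rho>1 z \<le> \<psi> \<rho>2 z"
proof -
  obtain w where w: "\<psi> \<rho>1 z / q \<le> z \<bullet> w - \<phi> \<rho>1 w / p" using fenchel_young_attained[OF \<rho>(1)] by blast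
  also have "\<dots> \<le> z \<bullet> w - \<phi> \<rho>2 w / p" using antimono[OF \<rho>] p_pos by (simp add: divide_right_mono)
  also have "\<dots> \<le> \<psi> \<rho>2 z / q" using fenchel_young \<rho> by simp
  finally show ?thesis using q_pos by (simp add: divide_le_cancel)
qed

lemma legendre_in_rho:
  "\<forall>z. concave_on {0<..} (\<lambda>\<rho>. \<psi> \<rho> z) \<and>
       (\<forall>\<rho>1 \<rho>2. 0 < \<rho>1 \<longrightarrow> \<rho>1 \<le> \<rho>2 \<longrightarrow> \<psi> \<rho>1 z \<le> \<psi> \<rho>2 z)"
  using legendre_concave legendre_mono by blast

lemma density_in_rho:
  "\<forall>w. convex_on {0<..} (\<lambda>\<rho>. \<phi> \<rho> w) \<and>
       (\<forall>\<rho>1 \<rho>2. 0 < \<rho>1 \<longrightarrow> \<rho>1 \<le> \<rho>2 \<longrightarrow> \<phi> \<rho>2 w \<le> \<phi> \<rho>1 w)"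
  using convex_in_rho antimono by blast

lemma density_lower_bound:
  assumes \<rho>: "0 < \<rho>" and c: "0 < c" and bound: "\<And>z. \<psi> \<rho> z \<le> c * norm z powr q"
  shows "c powr (1 - p) * norm w powr p \<le> \<phi> \<rho> w"
proof -
  have "c powr (1 - p) * norm w powr p / p \<le> \<phi> \<rho> w / p"
  proof (rule conjugate_exponents.young_scaled_sharp[OF swap c])
    fix z
    have "w \<bullet> z - c * norm z powr q / q \<le> w \<bullet> z - \<psi> \<rho> z / q"
      using bound[of z] q_pos by (simp add: divide_right_mono)
    also have "\<dots> \<le> \<phi> \<rho> w / p" using fenchel_young[OF \<rho>, of z w] by (simp add: inner_commute)
    finally show "w \<bullet> z - c * norm z powr q / q \<le> \<phi> \<rho> w / p" .
  qed
  thus ?thesis using p_pos by (simp add: divide_le_cancel)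
qed

text \<open>Part (3) in explicit form: a lower \<open>p\<close>-bound for \<open>\<phi>(1,\<cdot>)\<close> gives an upper \<open>q\<close>-bound
  for \<open>\<psi>(1,\<cdot>)\<close>, concavity spreads it linearly to all \<open>\<rho>\<close>, and dualising back yields
  the lower bound for \<open>\<phi>\<close>.\<close>
lemma linear_growth_bounds:
  "\<exists>M>0. \<forall>\<rho>>0. \<forall>z w. \<psi> \<rho> z \<le> (M + M * \<rho>) * norm z powr q \<and>
                        (M + M * \<rho>) powr (1 - p) * norm w powr p \<le> \<phi> \<rho> w"
proof -
  obtain m where m: "m > 0" "\<And>w. m * norm w powr p \<le> \<phi> 1 w"
    using p_gauge.bounded_below[OF slice_gauge[of 1]] by auto
  define M where "M = m powr (1 - q)"
  have M: "M > 0" using m by (simp add: M_def)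
  have at_1: "\<psi> 1 z \<le> M * norm z powr q" for z
    using p_gauge.dual_powr_upper[OF slice_gauge m] by (simp add: legendre_eq M_def)
  have upper: "\<psi> \<rho> z \<le> (M + M * \<rho>) * norm z powr q" if \<rho>: "0 < \<rho>" for \<rho> z
  proof -
    have "\<psi> \<rho> z \<le> (1 + \<rho>) * \<psi> 1 z"
      by (rule concave_nonneg_linear_growth[OF legendre_concave legendre_nonneg \<rho>])
    also have "\<dots> \<le> (1 + \<rho>) * (M * norm z powr q)" using at_1 \<rho> by (intro mult_left_mono) auto
    finally show ?thesis by (simp add: algebra_simps)
  qed
  have lower: "(M + M * \<rho>) powr (1 - p) * norm w powr p \<le> \<phi> \<rho> w" if \<rho>: "0 < \<rho>" for \<rho> w
  proof -
    have "0 < M + M * \<rho>" using M \<rho> by (simp add: add_pos_pos)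
    thus ?thesis by (rule density_lower_bound[OF \<rho> _ upper[OF \<rho>]])
  qed
  show ?thesis using M upper lower by blast
qed

lemma growth_bounds:
  "\<exists>a b. 0 \<le> a \<and> 0 \<le> b \<and> \<not> (a = 0 \<and> b = 0) \<and>
     (\<forall>\<rho>>0. \<forall>z w. \<psi> \<rho> z \<le> (a + b * \<rho>) * norm z powr q \<and>
                   (a + b * \<rho>) powr (1 - p) * norm w powr p \<le> \<phi> \<rho> w)"
proof -
  obtain M where "M > 0" "\<forall>\<rho>>0. \<forall>z w. \<psi> \<rho> z \<le> (M + M * \<rho>) * norm z powr q \<and>
                        (M + M * \<rho>) powr (1 - p) * norm w powr p \<le> \<phi> \<rho> w"
    using linear_growth_bounds by blast
  thus ?thesis by (intro exI[of _ M] exI[of _ M]) auto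
qed

text \<open>The linear growth bounds at \<open>r1\<close> give the lower bound for \<open>\<phi>\<close>
  and the upper bound for \<open>\<psi>\<close>; the comparison of the slice at \<open>r0\<close> with \<open>|w|^p\<close>,
  transported by monotonicity in \<open>\<rho>\<close>, gives the other two.\<close>
lemma local_bounds:
  "\<forall>r0 r1. 0 < r0 \<longrightarrow> r0 \<le> r1 \<longrightarrow>
     (\<exists>C>0. \<forall>\<rho>\<in>{r0..r1}. \<forall>w z.
        norm w powr p / C \<le> \<phi> \<rho> w \<and> \<phi> \<rho> w \<le> C * norm w powr p \<and>
        norm z powr q / C \<le> \<psi> \<rho> z \<and> \<psi> \<rho> z \<le> C * norm z powr q)"
  (is "\<forall>r0 r1. 0 < r0 \<longrightarrow> r0 \<le> r1 \<longrightarrow> ?comparable r0 r1")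
proof (intro allI impI)
  fix r0 r1 :: real assume r: "0 < r0" "r0 \<le> r1"
  obtain M where M: "M > 0" "\<forall>\<rho>>0. \<forall>z w. \<psi> \<rho> z \<le> (M + M * \<rho>) * norm z powr q \<and>
                        (M + M * \<rho>) powr (1 - p) * norm w powr p \<le> \<phi> \<rho> w"
    using linear_growth_bounds by blast
  define c where "c = M + M * r1"
  have c: "c > 0" using M r by (simp add: c_def add_pos_nonneg)
  obtain K where K: "K > 0" "\<And>w. \<phi> r0 w \<le> K * norm w powr p"
    using p_gauge.bounded_above[OF slice_gauge[OF r(1)]] by auto
  have \<psi>_r0: "K powr (1 - q) * norm z powr q \<le> \<psi> r0 z" for z
    using p_gauge.dual_powr_lower[OF slice_gauge[OF r(1)] K] r by (simp add: legendre_eq)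
  define C where "C = max (max K c) (max (1 / c powr (1 - p)) (1 / K powr (1 - q)))"
  have C: "C > 0" "K \<le> C" "c \<le> C" "1 / c powr (1 - p) \<le> C" "1 / K powr (1 - q) \<le> C"
    using K by (auto simp: C_def)
  show "?comparable r0 r1"
  proof (intro exI[of _ C] conjI ballI allI C(1))
    fix \<rho> :: real and w z :: 'a assume \<rho>: "\<rho> \<in> {r0..r1}"
    have \<rho>0: "0 < \<rho>" using \<rho> r by auto
    have Mc: "0 < M + M * \<rho>" "M + M * \<rho> \<le> c"
      using M(1) \<rho> \<rho>0 by (auto simp: c_def add_pos_pos)
    have "norm w powr p / C \<le> c powr (1 - p) * norm w powr p"
      using C c by (intro divide_le_mult_of_inverse_le) auto
    also have "\<dots> \<le> (M + M * \<rho>) powr (1 - p) * norm w powr p"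
      using Mc p_gt1 by (intro mult_right_mono powr_mono2') auto
    also have "\<dots> \<le> \<phi> \<rho> w" using M(2) \<rho>0 by blast
    finally show "norm w powr p / C \<le> \<phi> \<rho> w" .
    have "\<phi> \<rho> w \<le> \<phi> r0 w" using antimono r(1) \<rho> by auto
    also have "\<dots> \<le> K * norm w powr p" by (rule K(2))
    also have "\<dots> \<le> C * norm w powr p" using C(2) by (intro mult_right_mono) auto
    finally show "\<phi> \<rho> w \<le> C * norm w powr p" .
    have "norm z powr q / C \<le> K powr (1 - q) * norm z powr q"
      using C K by (intro divide_le_mult_of_inverse_le) auto
    also have "\<dots> \<le> \<psi> r0 z" by (rule \<psi>_r0)
    also have "\<dots> \<le> \<psi> \<rho> z" using legendre_mono[OF r(1)] \<rho> by auto
    finally show "norm z powr q / C \<le> \<psi> \<rho> z" .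
    have "\<psi> \<rho> z \<le> (M + M * \<rho>) * norm z powr q" using M(2) \<rho>0 by blast
    also have "\<dots> \<le> C * norm z powr q" using Mc C(3) by (intro mult_right_mono) auto
    finally show "\<psi> \<rho> z \<le> C * norm z powr q" .
  qed
qed

end

text \<open>Then \<open>\<phi>\<close> is admissible: joint convexity because \<open>\<phi>/p\<close> is a supremum of jointly
  convex functions, homogeneity by rescaling the dual variable, and positivity by testing
  against small multiples of \<open>w\<close>.\<close>
locale legendre_representation = conjugate_exponents +
  fixes \<phi> \<psi> :: "real \<Rightarrow> 'a::euclidean_space \<Rightarrow> real"
  assumes phi_nonneg: "\<And>\<rho> w. 0 < \<rho> \<Longrightarrow> 0 \<le> \<phi> \<rho> w"
    and psi_nonneg: "\<And>\<rho> z. 0 < \<rho> \<Longrightarrow> 0 \<le> \<psi> \<rho> z"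
    and psi_scale: "\<And>\<rho> c z. 0 < \<rho> \<Longrightarrow> \<psi> \<rho> (c *\<^sub>R z) = \<bar>c\<bar> powr q * \<psi> \<rho> z"
    and psi_positive: "\<And>\<rho> z. 0 < \<rho> \<Longrightarrow> z \<noteq> 0 \<Longrightarrow> 0 < \<psi> \<rho> z"
    and psi_concave: "\<And>z. concave_on {0<..} (\<lambda>\<rho>. \<psi> \<rho> z)"
    and representation:
      "\<And>\<rho> w. 0 < \<rho> \<Longrightarrow> ereal (\<phi> \<rho> w / p) = (SUP z. ereal (w \<bullet> z - \<psi> \<rho> z / q))"
begin

lemma below: "0 < \<rho> \<Longrightarrow> w \<bullet> z - \<psi> \<rho> z / q \<le> \<phi> \<rho> w / p"
proof -
  assume \<rho>: "0 < \<rho>"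
  have "ereal (w \<bullet> z - \<psi> \<rho> z / q) \<le> (SUP z. ereal (w \<bullet> z - \<psi> \<rho> z / q))" by (rule SUP_upper) simp
  thus ?thesis using representation[OF \<rho>, of w, symmetric] by simp
qed

lemma least: "0 < \<rho> \<Longrightarrow> (\<And>z. w \<bullet> z - \<psi> \<rho> z / q \<le> X) \<Longrightarrow> \<phi> \<rho> w / p \<le> X"
proof -
  assume \<rho>: "0 < \<rho>" and le: "\<And>z. w \<bullet> z - \<psi> \<rho> z / q \<le> X"
  have "(SUP z. ereal (w \<bullet> z - \<psi> \<rho> z / q)) \<le> ereal X" by (rule SUP_least) (simp add: le)
  thus ?thesis using representation[OF \<rho>, of w, symmetric] by simp
qed

lemma jointly_convex: "convex_on ({0<..} \<times> UNIV) (\<lambda>x. \<phi> (fst x) (snd x))"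
  unfolding convex_on_def
proof (intro conjI ballI allI impI)
  show "convex ({0::real<..} \<times> (UNIV::'a set))"
    by (intro convex_Times convex_UNIV convex_real_interval)
  fix x y :: "real \<times> 'a" and u v :: real
  assume h: "x \<in> {0<..} \<times> UNIV" "y \<in> {0<..} \<times> UNIV" "0 \<le> u" "0 \<le> v" "u + v = 1"
  obtain r1 w1 r2 w2 where xy: "x = (r1, w1)" "y = (r2, w2)" by (cases x, cases y) auto
  have r: "r1 > 0" "r2 > 0" using h xy by auto
  have r12: "u * r1 + v * r2 > 0" using h r by (cases "u = 0") (auto intro: add_pos_nonneg)
  have "\<phi> (u * r1 + v * r2) (u *\<^sub>R w1 + v *\<^sub>R w2) / p \<le> (u * \<phi> r1 w1 + v * \<phi> r2 w2) / p"
  proof (rule least[OF r12])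
    fix z
    have "u * \<psi> r1 z + v * \<psi> r2 z \<le> \<psi> (u * r1 + v * r2) z"
      using psi_concave[of z] h r unfolding concave_on_iff by auto
    hence "(u *\<^sub>R w1 + v *\<^sub>R w2) \<bullet> z - \<psi> (u * r1 + v * r2) z / q
          \<le> (u *\<^sub>R w1 + v *\<^sub>R w2) \<bullet> z - (u * \<psi> r1 z + v * \<psi> r2 z) / q"
      using q_pos by (simp add: divide_right_mono)
    also have "\<dots> = u * (w1 \<bullet> z - \<psi> r1 z / q) + v * (w2 \<bullet> z - \<psi> r2 z / q)"
      by (simp add: algebra_simps add_divide_distrib)
    also have "\<dots> \<le> u * (\<phi> r1 w1 / p) + v * (\<phi> r2 w2 / p)"
      using h below r by (intro add_mono mult_left_mono) auto
    finally show "(u *\<^sub>R w1 + v *\<^sub>R w2) \<bullet> z - \<psi> (u * r1 + v * r2) z / q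
                  \<le> (u * \<phi> r1 w1 + v * \<phi> r2 w2) / p"
      by (simp add: add_divide_distrib)
  qed
  thus "\<phi> (fst (u *\<^sub>R x + v *\<^sub>R y)) (snd (u *\<^sub>R x + v *\<^sub>R y)) \<le> u * \<phi> (fst x) (snd x) + v * \<phi> (fst y) (snd y)"
    using p_pos by (simp add: xy divide_le_cancel)
qed

text \<open>Substituting \<open>z \<mapsto> (t/\<bar>t\<bar>^p) z\<close> in the supremum shows \<open>\<phi>(\<rho>, t w) \<le> \<bar>t\<bar>^p \<phi>(\<rho>, w)\<close>.\<close>
lemma scale_le:
  assumes \<rho>: "0 < \<rho>" and t: "t \<noteq> 0"
  shows "\<phi> \<rho> (t *\<^sub>R w) \<le> \<bar>t\<bar> powr p * \<phi> \<rho> w"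
proof -
  define s where "s = t / \<bar>t\<bar> powr p"
  have at: "\<bar>t\<bar> > 0" using t by simp
  have ts: "\<bar>t\<bar> powr p * s = t" using at by (simp add: s_def)
  have "\<bar>s\<bar> = \<bar>t\<bar> powr (1 - p)" using at by (simp add: s_def abs_divide powr_diff)
  moreover have "(1 - p) * q = - p" using p_gt1 unfolding q_eq by (simp add: field_simps)
  ultimately have sq: "\<bar>s\<bar> powr q = \<bar>t\<bar> powr (- p)" by (simp add: powr_powr)
  have tp: "\<bar>t\<bar> powr p * \<bar>t\<bar> powr (- p) = 1" using at by (simp add: powr_minus)
  have "\<phi> \<rho> (t *\<^sub>R w) / p \<le> \<bar>t\<bar> powr p * (\<phi> \<rho> w / p)"
  proof (rule least[OF \<rho>])
    fix z
    have "s * (w \<bullet> z) - \<bar>t\<bar> powr (- p) * \<psi> \<rho> z / q \<le> \<phi> \<rho> w / p"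
      using below[OF \<rho>, of w "s *\<^sub>R z"] psi_scale[OF \<rho>] sq by simp
    hence "\<bar>t\<bar> powr p * (s * (w \<bullet> z) - \<bar>t\<bar> powr (- p) * \<psi> \<rho> z / q) \<le> \<bar>t\<bar> powr p * (\<phi> \<rho> w / p)"
      by (intro mult_left_mono) auto
    moreover have "\<bar>t\<bar> powr p * (s * (w \<bullet> z) - \<bar>t\<bar> powr (- p) * \<psi> \<rho> z / q)
                 = (t *\<^sub>R w) \<bullet> z - \<psi> \<rho> z / q"
      using ts tp by (simp add: algebra_simps)
    ultimately show "(t *\<^sub>R w) \<bullet> z - \<psi> \<rho> z / q \<le> \<bar>t\<bar> powr p * (\<phi> \<rho> w / p)" by simp
  qed
  thus ?thesis using p_pos by (simp add: divide_le_cancel)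
qed

lemma at_zero: "0 < \<rho> \<Longrightarrow> \<phi> \<rho> 0 = 0"
proof -
  assume \<rho>: "0 < \<rho>"
  have "\<phi> \<rho> 0 / p \<le> 0" by (rule least[OF \<rho>]) (use psi_nonneg[OF \<rho>] q_pos in simp)
  thus ?thesis using phi_nonneg[OF \<rho>, of 0] p_pos by (simp add: divide_le_0_iff)
qed

lemma homogeneous: "0 < \<rho> \<Longrightarrow> \<phi> \<rho> (t *\<^sub>R w) = \<bar>t\<bar> powr p * \<phi> \<rho> w"
proof (cases "t = 0")
  case True thus "0 < \<rho> \<Longrightarrow> ?thesis" using at_zero by simp
next
  case False
  assume \<rho>: "0 < \<rho>"
  have "\<phi> \<rho> w = \<phi> \<rho> ((1/t) *\<^sub>R (t *\<^sub>R w))" using False by simp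
  also have "\<dots> \<le> \<bar>1/t\<bar> powr p * \<phi> \<rho> (t *\<^sub>R w)" using scale_le[OF \<rho>, of "1/t" "t *\<^sub>R w"] False by simp
  finally have "\<bar>t\<bar> powr p * \<phi> \<rho> w \<le> \<bar>t\<bar> powr p * (\<bar>1/t\<bar> powr p * \<phi> \<rho> (t *\<^sub>R w))"
    by (intro mult_left_mono) auto
  also have "\<dots> = \<phi> \<rho> (t *\<^sub>R w)" using False by (simp add: powr_divide abs_divide)
  finally show ?thesis using scale_le[OF \<rho> False, of w] by simp
qed

text \<open>Testing with \<open>z = e w\<close> for a suitable small \<open>e > 0\<close> gives \<open>\<phi>(1,w)/p \<ge> e |w|\<^sup>2/2\<close>.\<close>
lemma positive_at_one: assumes w: "w \<noteq> 0" shows "0 < \<phi> 1 w"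
proof -
  define P where "P = \<psi> 1 w"
  have P: "P > 0" using psi_positive w by (simp add: P_def)
  define n2 where "n2 = w \<bullet> w"
  have n2: "n2 > 0" using w by (simp add: n2_def)
  define e where "e = (q * n2 / (2 * P)) powr (1 / (q - 1))"
  have e: "e > 0" using q_pos n2 P by (simp add: e_def)
  have "e powr (q - 1) = q * n2 / (2 * P)" using q_gt1 q_pos n2 P by (simp add: e_def powr_powr)
  moreover have "e * e powr (q - 1) = e powr q" using e by (simp add: powr_mult_base)
  ultimately have eq: "e powr q = e * (q * n2 / (2 * P))" by simp
  have tested: "w \<bullet> (e *\<^sub>R w) - \<psi> 1 (e *\<^sub>R w) / q = e * n2 / 2"
    using psi_scale e eq P q_pos by (simp add: n2_def P_def field_simps)
  have "e * n2 / 2 \<le> \<phi> 1 w / p" using below[of 1 w "e *\<^sub>R w"] unfolding tested by simp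
  moreover have "0 < e * n2 / 2" using e n2 by simp
  ultimately have "0 < \<phi> 1 w / p" by linarith
  thus ?thesis using p_pos by (simp add: zero_less_divide_iff)
qed

lemma admissible: "admissible p \<phi>"
  unfolding admissible_def
  using phi_nonneg jointly_convex homogeneous positive_at_one by (blast intro: zero_less_one)

end

context conjugate_exponents
begin

lemma admissible_iff_representation:
  fixes \<phi> :: "real \<Rightarrow> 'a::euclidean_space \<Rightarrow> real"
  assumes nonneg: "\<forall>\<rho>>0. \<forall>w. 0 \<le> \<phi> \<rho> w"
  shows "admissible p \<phi> \<longleftrightarrow>
        (\<exists>\<psi> :: real \<Rightarrow> 'a \<Rightarrow> real.
           (\<forall>\<rho>>0. \<forall>z. 0 \<le> \<psi> \<rho> z) \<and>
           (\<forall>\<rho>>0. convex_on UNIV (\<psi> \<rho>)) \<and>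
           (\<forall>\<rho>>0. \<forall>c z. \<psi> \<rho> (c *\<^sub>R z) = \<bar>c\<bar> powr q * \<psi> \<rho> z) \<and>
           (\<forall>\<rho>>0. \<forall>z. z \<noteq> 0 \<longrightarrow> 0 < \<psi> \<rho> z) \<and>
           (\<forall>z. concave_on {0<..} (\<lambda>\<rho>. \<psi> \<rho> z)) \<and>
           (\<forall>\<rho>>0. \<forall>w. ereal (\<phi> \<rho> w / p) = (SUP z. ereal (w \<bullet> z - \<psi> \<rho> z / q))))"
    (is "_ \<longleftrightarrow> ?representable")
proof
  assume "admissible p \<phi>"
  then interpret admissible_density p q \<phi> by unfold_locales
  show ?representable
    by (intro exI[of _ "legendre p q \<phi>"] conjI allI impI)
       (simp_all add: legendre_nonneg legendre_convex legendre_scale legendre_positive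
         legendre_concave biconjugate)
next
  assume ?representable
  then obtain \<psi> :: "real \<Rightarrow> 'a \<Rightarrow> real" where
    "\<forall>\<rho>>0. \<forall>z. 0 \<le> \<psi> \<rho> z" "\<forall>\<rho>>0. \<forall>c z. \<psi> \<rho> (c *\<^sub>R z) = \<bar>c\<bar> powr q * \<psi> \<rho> z"
    "\<forall>\<rho>>0. \<forall>z. z \<noteq> 0 \<longrightarrow> 0 < \<psi> \<rho> z" "\<forall>z. concave_on {0<..} (\<lambda>\<rho>. \<psi> \<rho> z)"
    "\<forall>\<rho>>0. \<forall>w. ereal (\<phi> \<rho> w / p) = (SUP z. ereal (w \<bullet> z - \<psi> \<rho> z / q))"
    by blast
  with nonneg interpret legendre_representation p q \<phi> \<psi> by unfold_locales auto
  show "admissible p \<phi>" by (rule admissible)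
qed

end


theorem mainTheorem1:
  fixes p q :: real and \<phi> :: "real \<Rightarrow> 'a::euclidean_space \<Rightarrow> real"
  assumes hp: "p > 1" and hq: "q = p / (p - 1)"
  shows
   "(admissible p \<phi> \<longrightarrow>
      (let \<psi> = legendre p q \<phi> in
       \<comment> \<open>(1)\<close>
       (\<forall>\<rho>>0.
          is_norm (\<lambda>w. \<phi> \<rho> w powr (1/p)) \<and>
          is_norm (\<lambda>z. \<psi> \<rho> z powr (1/q)) \<and>
          (\<forall>z. ereal (\<psi> \<rho> z powr (1/q)) =
               (SUP w\<in>-{0}. ereal ((w \<bullet> z) / \<phi> \<rho> w powr (1/p)))) \<and>
          (\<forall>w. ereal (\<phi> \<rho> w powr (1/p)) =
               (SUP z\<in>-{0}. ereal ((w \<bullet> z) / \<psi> \<rho> z powr (1/q)))) \<and>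
          (\<forall>c z. \<psi> \<rho> (c *\<^sub>R z) = \<bar>c\<bar> powr q * \<psi> \<rho> z)) \<and>
       \<comment> \<open>(2)\<close>
       (\<forall>\<rho>>0. \<forall>z. legendre_ereal p q \<phi> \<rho> z \<noteq> \<infinity> \<and> 0 \<le> legendre_ereal p q \<phi> \<rho> z) \<and>
       (\<forall>z. concave_on {0<..} (\<lambda>\<rho>. \<psi> \<rho> z) \<and>
            (\<forall>\<rho>1 \<rho>2. 0 < \<rho>1 \<longrightarrow> \<rho>1 \<le> \<rho>2 \<longrightarrow> \<psi> \<rho>1 z \<le> \<psi> \<rho>2 z)) \<and>
       (\<forall>w. convex_on {0<..} (\<lambda>\<rho>. \<phi> \<rho> w) \<and>
            (\<forall>\<rho>1 \<rho>2. 0 < \<rho>1 \<longrightarrow> \<rho>1 \<le> \<rho>2 \<longrightarrow> \<phi> \<rho>2 w \<le> \<phi> \<rho>1 w)) \<and>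
       \<comment> \<open>(3)\<close>
       (\<exists>a b. 0 \<le> a \<and> 0 \<le> b \<and> \<not> (a = 0 \<and> b = 0) \<and>
          (\<forall>\<rho>>0. \<forall>z w.
             \<psi> \<rho> z \<le> (a + b * \<rho>) * norm z powr q \<and>
             (a + b * \<rho>) powr (1 - p) * norm w powr p \<le> \<phi> \<rho> w)) \<and>
       \<comment> \<open>(4)\<close>
       (\<forall>r0 r1. 0 < r0 \<longrightarrow> r0 \<le> r1 \<longrightarrow>
          (\<exists>C>0. \<forall>\<rho>\<in>{r0..r1}. \<forall>w z.
             norm w powr p / C \<le> \<phi> \<rho> w \<and> \<phi> \<rho> w \<le> C * norm w powr p \<and>
             norm z powr q / C \<le> \<psi> \<rho> z \<and> \<psi> \<rho> z \<le> C * norm z powr q)))) \<and>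
    \<comment> \<open>converse characterisation\<close>
    ((\<forall>\<rho>>0. \<forall>w. 0 \<le> \<phi> \<rho> w) \<longrightarrow>
      (admissible p \<phi> \<longleftrightarrow>
        (\<exists>\<psi> :: real \<Rightarrow> 'a \<Rightarrow> real.
           (\<forall>\<rho>>0. \<forall>z. 0 \<le> \<psi> \<rho> z) \<and>
           (\<forall>\<rho>>0. convex_on UNIV (\<psi> \<rho>)) \<and>
           (\<forall>\<rho>>0. \<forall>c z. \<psi> \<rho> (c *\<^sub>R z) = \<bar>c\<bar> powr q * \<psi> \<rho> z) \<and>
           (\<forall>\<rho>>0. \<forall>z. z \<noteq> 0 \<longrightarrow> 0 < \<psi> \<rho> z) \<and>
           (\<forall>z. concave_on {0<..} (\<lambda>\<rho>. \<psi> \<rho> z)) \<and>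
           (\<forall>\<rho>>0. \<forall>w. ereal (\<phi> \<rho> w / p) =
                (SUP z. ereal (w \<bullet> z - \<psi> \<rho> z / q))))))"
proof -
  interpret conjugate_exponents p q using hp hq by unfold_locales
  have density: "admissible_density p q \<phi>" if "admissible p \<phi>"
    using that by unfold_locales
  note forward = admissible_density.dual_norms[OF density]
    admissible_density.legendre_ereal_finite[OF density]
    admissible_density.legendre_in_rho[OF density] admissible_density.density_in_rho[OF density]
    admissible_density.growth_bounds[OF density] admissible_density.local_bounds[OF density]
  show ?thesis
    unfolding Let_def by (intro conjI impI) (erule forward admissible_iff_representation)+
qed

end
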